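(* Let $R$ and $B$ be $n\times n$ nonnegative matrices that have the same entrywise positive left and right eigenvectors $u$ and $v$ for eigenvalue $1$ (i.e. $Rv=v$, $R^Tu=u$, $Bv=v$, $B^Tu=u$). Then for every nonempty $S\subseteq[n]$, \[ \phi_S(RB)\le\phi_S(R)+\phi_S(B). \]
   Context: For a nonnegative $M$ with $Mv=v$, $M^Tu=u$, $\phi_S(M)=\langle\mathbf 1_S,D_uMD_v\mathbf 1_{\overline S}\rangle/\langle\mathbf 1_S,D_uMD_v\mathbf 1\rangle$, where $D_x$ is the diagonal matrix with $x$ on the diagonal and $\mathbf 1_S$ is the indicator vector of $S$. *)

theory Defs
  imports "HOL-Analysis.Analysis"
begin

definition diag_mat :: "real ^ 'n \<Rightarrow> real ^ 'n ^ 'n" where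
  "diag_mat x = (\<chi> i j. if i = j then x $ i else 0)"

definition indic_vec :: "'n set \<Rightarrow> real ^ 'n" where
  "indic_vec S = (\<chi> i. if i \<in> S then 1 else 0)"

definition nonneg_mat :: "real ^ 'n ^ 'n \<Rightarrow> bool" where
  "nonneg_mat M \<longleftrightarrow> (\<forall>i j. M $ i $ j \<ge> 0)"

definition pos_vec :: "real ^ 'n \<Rightarrow> bool" where
  "pos_vec x \<longleftrightarrow> (\<forall>i. x $ i > 0)"

definition phi :: "real ^ 'n \<Rightarrow> real ^ 'n \<Rightarrow> 'n set \<Rightarrow> real ^ 'n ^ 'n \<Rightarrow> real" where
  "phi u v S M =
     (indic_vec S \<bullet> ((diag_mat u ** M ** diag_mat v) *v indic_vec (- S))) /
     (indic_vec S \<bullet> ((diag_mat u ** M ** diag_mat v) *v indic_vec UNIV))"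

end

theory Submission
  imports Defs
begin

text \<open>
  Write \<open>E\<^sub>M(S,T) = \<Sum>i\<in>S. \<Sum>j\<in>T. u\<^sub>i M\<^sub>i\<^sub>j v\<^sub>j\<close>. Since \<open>Mv = v\<close>, the denominator of
  \<open>\<phi>\<^sub>S(M)\<close> is \<open>\<Sum>i\<in>S. u\<^sub>i v\<^sub>i\<close>, independent of \<open>M\<close>, so it suffices to compare the numerators
  \<open>E\<^sub>M(S,-S)\<close>. Expanding the product,
  \<open>E\<^sub>R\<^sub>B(S,-S) = \<Sum>k. a\<^sub>k c\<^sub>k\<close> with \<open>a\<^sub>k = \<Sum>i\<in>S. u\<^sub>i R\<^sub>i\<^sub>k\<close> and \<open>c\<^sub>k = \<Sum>j\<notin>S. B\<^sub>k\<^sub>j v\<^sub>j\<close>.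
  By nonnegativity and \<open>R\<^sup>Tu = u\<close>, \<open>Bv = v\<close> we have \<open>a\<^sub>k \<le> u\<^sub>k\<close> and \<open>c\<^sub>k \<le> v\<^sub>k\<close>; bounding \<open>a\<^sub>k\<close>
  for \<open>k \<in> S\<close> gives \<open>E\<^sub>B(S,-S)\<close> and bounding \<open>c\<^sub>k\<close> for \<open>k \<notin> S\<close> gives \<open>E\<^sub>R(S,-S)\<close>.
\<close>

definition weighted_flow :: "real ^ 'n \<Rightarrow> real ^ 'n \<Rightarrow> real ^ 'n ^ 'n \<Rightarrow> 'n set \<Rightarrow> 'n set \<Rightarrow> real"
  where "weighted_flow u v M S T = (\<Sum>i\<in>S. \<Sum>j\<in>T. u$i * M$i$j * v$j)"

lemma sum_indicator_mult:
  fixes S :: "'a::finite set" and f :: "'a \<Rightarrow> real"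
  shows "(\<Sum>i\<in>UNIV. (if i \<in> S then 1 else 0) * f i) = sum f S"
  by (simp add: if_distrib[where f = "\<lambda>x. x * _"] sum.If_cases)

lemma diag_mat_mult_diag_mat_component:
  "(diag_mat u ** M ** diag_mat v) $ i $ j = u$i * M$i$j * v$j"
  by (simp add: matrix_matrix_mult_def diag_mat_def if_distrib[where f = "\<lambda>x. _ * x"]
      if_distrib[where f = "\<lambda>x. x * _"] sum.delta sum.delta' cong: if_cong)

lemma inner_indic_vec_diag_mat_mult:
  "indic_vec S \<bullet> ((diag_mat u ** M ** diag_mat v) *v indic_vec T) = weighted_flow u v M S T"
  by (simp add: inner_vec_def indic_vec_def matrix_vector_mult_def weighted_flow_def
      diag_mat_mult_diag_mat_component sum_indicator_mult mult.commute[where b = "if _ then _ else _"])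
lemma weighted_flow_UNIV:
  assumes "M *v v = v"
  shows "weighted_flow u v M S UNIV = (\<Sum>i\<in>S. u$i * v$i)"
  unfolding weighted_flow_def
proof (rule sum.cong[OF refl])
  fix i
  have "v$i = (\<Sum>j\<in>UNIV. M$i$j * v$j)"
    using arg_cong[where f = "\<lambda>x. x $ i", OF assms] by (simp add: matrix_vector_mult_def)
  then show "(\<Sum>j\<in>UNIV. u$i * M$i$j * v$j) = u$i * v$i"
    by (simp add: sum_distrib_left mult.assoc)
qed

lemma phi_eq_weighted_flow:
  assumes "M *v v = v"
  shows "phi u v S M = weighted_flow u v M S (- S) / (\<Sum>i\<in>S. u$i * v$i)"
  by (simp add: phi_def inner_indic_vec_diag_mat_mult weighted_flow_UNIV[OF assms])

lemma weighted_flow_matrix_mult: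
  "weighted_flow u v (R ** B) S T =
     (\<Sum>k\<in>UNIV. (\<Sum>i\<in>S. u$i * R$i$k) * (\<Sum>j\<in>T. B$k$j * v$j))"
proof -
  have "weighted_flow u v (R ** B) S T = (\<Sum>i\<in>S. \<Sum>j\<in>T. \<Sum>k\<in>UNIV. u$i * R$i$k * (B$k$j * v$j))"
    by (simp add: weighted_flow_def matrix_matrix_mult_def sum_distrib_left sum_distrib_right
        mult.assoc)
  also have "\<dots> = (\<Sum>k\<in>UNIV. \<Sum>i\<in>S. \<Sum>j\<in>T. u$i * R$i$k * (B$k$j * v$j))"
    by (simp only: sum.swap[where A = T and B = UNIV]) (rule sum.swap)
  also have "\<dots> = (\<Sum>k\<in>UNIV. (\<Sum>i\<in>S. u$i * R$i$k) * (\<Sum>j\<in>T. B$k$j * v$j))"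
    by (simp add: sum_product)
  finally show ?thesis .
qed

lemma sum_left_eigenvector_le:
  assumes "nonneg_mat R" "\<forall>i. 0 \<le> u$i" "transpose R *v u = u"
  shows "(\<Sum>i\<in>S. u$i * R$i$k) \<le> u$k"
proof -
  have "(\<Sum>i\<in>S. u$i * R$i$k) \<le> (\<Sum>i\<in>UNIV. u$i * R$i$k)"
    using assms(1,2) unfolding nonneg_mat_def by (intro sum_mono2) auto
  also have "\<dots> = (transpose R *v u) $ k"
    by (simp add: matrix_vector_mult_def transpose_def mult.commute)
  finally show ?thesis using assms(3) by simp
qed

lemma sum_right_eigenvector_le:
  assumes "nonneg_mat B" "\<forall>j. 0 \<le> v$j" "B *v v = v"
  shows "(\<Sum>j\<in>T. B$k$j * v$j) \<le> v$k"
proof -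
  have "(\<Sum>j\<in>T. B$k$j * v$j) \<le> (\<Sum>j\<in>UNIV. B$k$j * v$j)"
    using assms(1,2) unfolding nonneg_mat_def by (intro sum_mono2) auto
  also have "\<dots> = (B *v v) $ k"
    by (simp add: matrix_vector_mult_def)
  finally show ?thesis using assms(3) by simp
qed
lemma weighted_flow_matrix_mult_cut_le:
  assumes "nonneg_mat R" "nonneg_mat B" "\<forall>i. 0 \<le> u$i" "\<forall>j. 0 \<le> v$j"
    and "transpose R *v u = u" "B *v v = v"
  shows "weighted_flow u v (R ** B) S (- S) \<le> weighted_flow u v R S (- S) + weighted_flow u v B S (- S)"
proof -
  define a where "a k = (\<Sum>i\<in>S. u$i * R$i$k)" for k
  define c where "c k = (\<Sum>j\<in>- S. B$k$j * v$j)" for k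
  have a_nonneg: "0 \<le> a k" for k
    using assms(1,3) unfolding a_def nonneg_mat_def by (simp add: sum_nonneg)
  have c_nonneg: "0 \<le> c k" for k
    using assms(2,4) unfolding c_def nonneg_mat_def by (simp add: sum_nonneg)
  have "weighted_flow u v (R ** B) S (- S) = (\<Sum>k\<in>S. a k * c k) + (\<Sum>k\<in>- S. a k * c k)"
  proof -
    have "sum f UNIV = sum f S + sum f (- S)" for f :: "_ \<Rightarrow> real"
      using sum.subset_diff[of S UNIV f] by (simp add: Compl_eq_Diff_UNIV)
    then show ?thesis
      unfolding weighted_flow_matrix_mult a_def [symmetric] c_def [symmetric] .
  qed
  also have "\<dots> \<le> (\<Sum>k\<in>S. u$k * c k) + (\<Sum>k\<in>- S. a k * v$k)"
  proof (intro add_mono sum_mono mult_right_mono mult_left_mono)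
    show "a k \<le> u$k" for k
      unfolding a_def using assms(1,3,5) by (rule sum_left_eigenvector_le)
    show "c k \<le> v$k" for k
      unfolding c_def using assms(2,4,6) by (rule sum_right_eigenvector_le)
  qed (simp_all add: a_nonneg c_nonneg)
  also have "(\<Sum>k\<in>S. u$k * c k) = weighted_flow u v B S (- S)"
    by (simp add: weighted_flow_def c_def sum_distrib_left mult.assoc)
  also have "(\<Sum>k\<in>- S. a k * v$k) = weighted_flow u v R S (- S)"
    unfolding weighted_flow_def a_def sum_distrib_right by (rule sum.swap)
  finally show ?thesis by linarith
qed

theorem lemma3p12:
  fixes R B :: "real ^ 'n ^ 'n" and u v :: "real ^ 'n" and S :: "'n set"
  assumes "nonneg_mat R" and "nonneg_mat B"
    and "pos_vec u" and "pos_vec v"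
    and "R *v v = v" and "transpose R *v u = u"
    and "B *v v = v" and "transpose B *v u = u"
    and "S \<noteq> {}"
  shows "phi u v S (R ** B) \<le> phi u v S R + phi u v S B"
proof -
  have u_pos: "\<forall>i. 0 < u$i" and v_pos: "\<forall>i. 0 < v$i"
    using assms(3,4) unfolding pos_vec_def by auto
  have "0 < (\<Sum>i\<in>S. u$i * v$i)"
    using assms(9) u_pos v_pos by (intro sum_pos) auto
  moreover have "(R ** B) *v v = v"
    using assms(5,7) by (simp flip: matrix_vector_mul_assoc)
  moreover have "weighted_flow u v (R ** B) S (- S) \<le> weighted_flow u v R S (- S) + weighted_flow u v B S (- S)"
    using assms(1,2,6,7) u_pos v_pos by (intro weighted_flow_matrix_mult_cut_le) (auto intro: less_imp_le)
  ultimately show ?thesis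
    by (simp add: phi_eq_weighted_flow assms(5,7) add_divide_distrib [symmetric] divide_right_mono)
qed
end
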